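(* Let $\tilde q=q^2$. For all integers $v\geq 1$ and $L\geq 0$, \[ \sum_{n_1,\ldots,n_v\geq 0} \frac{\tilde q^{\sum_{i=1}^v N_i(N_i+1)}}{(\tilde q)_{n_1}\cdots(\tilde q)_{n_{v-1}}(\tilde q)_{2n_v+1}}\cdot\frac{(q^3;q^6)_{n_v}}{(q;q^2)_{n_v}}\cdot\frac{(\tilde q)_{2L+1}}{(\tilde q)_{L-N_1}} =\sum_{j=-\infty}^{\infty} (-1)^j q^{(2v+1)j^2+2vj}\left(\frac{j+1}{3}\right){2L+1 \brack L-j}_{\tilde q}, \] where $N_i=n_i+n_{i+1}+\cdots+n_v$ for $i=1,\ldots,v$ (for $v=1$ the product $(\tilde q)_{n_1}\cdots(\tilde q)_{n_{v-1}}$ is empty).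
   Context: For a variable $a$ and integer $n\ge 0$, $(a;q)_n=(1-a)(1-aq)\cdots(1-aq^{n-1})$, and $(\tilde q)_n=(\tilde q;\tilde q)_n$; by convention $1/(\tilde q)_n=0$ for negative integers $n$. The $q$-binomial coefficient in base $\tilde q$ is ${A \brack B}_{\tilde q}=\frac{(\tilde q;\tilde q)_A}{(\tilde q;\tilde q)_B(\tilde q;\tilde q)_{A-B}}$ if $0\le B\le A$ are integers, and $0$ otherwise. $\left(\frac{j}{3}\right)$ is the Legendre symbol modulo 3: it equals $1$ if $j\equiv 1 \pmod 3$, $-1$ if $j\equiv -1\pmod 3$, and $0$ if $3\mid j$. *)

theory Defs
  imports "HOL-Analysis.Analysis" "HOL-Number_Theory.Number_Theory"
begin

definition qpoch :: "complex \<Rightarrow> complex \<Rightarrow> nat \<Rightarrow> complex" where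
  "qpoch a q n = (\<Prod>k<n. 1 - a * q ^ k)"

definition qfac :: "complex \<Rightarrow> nat \<Rightarrow> complex" where
  "qfac qt n = qpoch qt qt n"

definition inv_qfac :: "complex \<Rightarrow> int \<Rightarrow> complex" where
  "inv_qfac qt n = (if n < 0 then 0 else 1 / qfac qt (nat n))"

definition qbinom :: "complex \<Rightarrow> int \<Rightarrow> int \<Rightarrow> complex" where
  "qbinom qt A B = (if 0 \<le> B \<and> B \<le> A
      then qfac qt (nat A) / (qfac qt (nat B) * qfac qt (nat (A - B))) else 0)"

end

theory Submission
  imports Defs
begin

text \<open>Write \<open>p = q\<^sup>2\<close>. The left-hand side is the \<open>v\<close>-fold iterate of Bailey's lemma (relative
  to \<open>a = p\<close> in base \<open>p\<close>, with both free parameters sent to infinity) applied to one seed Bailey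
  pair: summing out \<open>n\<^sub>1\<close> is one step \<open>\<beta> \<mapsto> \<Sum>\<^sub>K p\<^bsup>K(K+1)\<^esup> \<beta>\<^sub>K / (p)\<^sub>L\<^sub>-\<^sub>K\<close> of the chain,
  and on the \<open>\<alpha>\<close>-side every step contributes a factor \<open>p\<^bsup>j(j+1)\<^esup>\<close>, which accounts for the
  exponent \<open>(2v+1)j\<^sup>2 + 2vj\<close>. The seed pair \<open>\<beta>\<^sub>K = (q\<^sup>3;q\<^sup>6)\<^sub>K / ((q;q\<^sup>2)\<^sub>K (p)\<^sub>2\<^sub>K\<^sub>+\<^sub>1)\<close>,
  \<open>\<alpha>\<^sub>j = (-1)\<^sup>j q\<^bsup>j\<^sup>2\<^esup> ((j+1)/3)\<close> comes from the finite Jacobi triple product at the two primitive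
  cube roots of unity \<open>\<omega>, \<omega>\<^sup>2\<close>: since \<open>(1 - \<omega>x)(1 - \<omega>\<^sup>2x) = 1 + x + x\<^sup>2\<close>, both evaluations share
  the product side, and \<open>\<omega>\<^sup>2\<close> times the first minus \<open>\<omega>\<close> times the second isolates the Legendre
  symbol. Finally \<open>(p)\<^sub>2\<^sub>L\<^sub>+\<^sub>1 / ((p)\<^sub>L\<^sub>-\<^sub>j (p)\<^sub>L\<^sub>+\<^sub>j\<^sub>+\<^sub>1)\<close> is the \<open>q\<close>-binomial coefficient
  on the right.\<close>

section \<open>\<open>q\<close>-factorials and Gaussian polynomials\<close>

lemma qfac_0 [simp]: "qfac p 0 = 1"
  by (simp add: qfac_def qpoch_def)

lemma qfac_Suc: "qfac p (Suc n) = qfac p n * (1 - p ^ Suc n)"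
  by (simp add: qfac_def qpoch_def)

lemma norm_power_less_one:
  fixes p :: "'a :: real_normed_div_algebra"
  assumes "norm p < 1" and "0 < n"
  shows "norm (p ^ n) < 1"
  using assms by (simp add: norm_power power_less_one_iff)

lemma qfac_nonzero:
  assumes "norm p < 1"
  shows "qfac p n \<noteq> 0"
proof (induction n)
  case (Suc n)
  have "norm (p ^ Suc n) < 1"
    using assms by (rule norm_power_less_one) simp
  then have "p ^ Suc n \<noteq> 1"
    by auto
  with Suc.IH show ?case
    by (simp add: qfac_Suc)
qed simp

lemma inv_qfac_of_nat [simp]: "inv_qfac p (int n) = 1 / qfac p n"
  by (simp add: inv_qfac_def)

lemma inv_qfac_neg: "n < 0 \<Longrightarrow> inv_qfac p n = 0"
  by (simp add: inv_qfac_def)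

fun gauss_binom :: "'a::comm_ring_1 \<Rightarrow> nat \<Rightarrow> nat \<Rightarrow> 'a" where
  "gauss_binom p 0 k = (if k = 0 then 1 else 0)"
| "gauss_binom p (Suc n) 0 = 1"
| "gauss_binom p (Suc n) (Suc k) = gauss_binom p n k + p ^ Suc k * gauss_binom p n (Suc k)"

lemma gauss_binom_0_right [simp]: "gauss_binom p n 0 = 1"
  by (cases n) auto

lemma gauss_binom_eq_0: "n < k \<Longrightarrow> gauss_binom p n k = 0"
proof (induction n arbitrary: k)
  case (Suc n)
  then obtain k' where "k = Suc k'"
    by (cases k) auto
  with Suc show ?case
    by simp
qed simp

lemma gauss_binom_diag [simp]: "gauss_binom p n n = 1"
  by (induction n) (simp_all add: gauss_binom_eq_0)

lemma gauss_binom_at_0: "k \<le> n \<Longrightarrow> gauss_binom 0 n k = 1"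
proof (induction n arbitrary: k)
  case (Suc n)
  then show ?case
    by (cases k) auto
qed simp

lemma gauss_binom_mult_qfac:
  "k \<le> n \<Longrightarrow> gauss_binom p n k * qfac p k * qfac p (n - k) = qfac p n"
proof (induction n arbitrary: k)
  case (Suc n)
  show ?case
  proof (cases k)
    case (Suc k')
    show ?thesis
    proof (cases "k' = n")
      case True
      with Suc show ?thesis
        by (simp add: gauss_binom_eq_0 qfac_Suc)
    next
      case False
      with Suc \<open>k \<le> Suc n\<close> have "Suc k' \<le> n"
        by simp
      then have IH: "gauss_binom p n k' * qfac p k' * qfac p (n - k') = qfac p n"
          "gauss_binom p n (Suc k') * qfac p (Suc k') * qfac p (n - Suc k') = qfac p n"
        using Suc.IH by simp_all
      have "n - k' = Suc (n - Suc k')" and "p ^ Suc k' * p ^ (n - k') = p ^ Suc n"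
        using \<open>Suc k' \<le> n\<close> by (simp_all flip: power_add)
      have "gauss_binom p (Suc n) k * qfac p k * qfac p (Suc n - k)
          = (gauss_binom p n k' + p ^ Suc k' * gauss_binom p n (Suc k'))
            * (qfac p k' * (1 - p ^ Suc k')) * qfac p (n - k')"
        using Suc by (simp add: qfac_Suc)
      also have "\<dots> = (gauss_binom p n k' * qfac p k' * qfac p (n - k')) * (1 - p ^ Suc k')
          + p ^ Suc k' * (gauss_binom p n (Suc k') * qfac p (Suc k') * qfac p (n - Suc k'))
            * (1 - p ^ (n - k'))"
        unfolding \<open>n - k' = Suc (n - Suc k')\<close> by (simp add: qfac_Suc algebra_simps)
      also have "\<dots> = qfac p n * (1 - p ^ Suc n)"
        by (simp only: IH flip: \<open>p ^ Suc k' * p ^ (n - k') = p ^ Suc n\<close>) (simp add: algebra_simps)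
      also have "\<dots> = qfac p (Suc n)"
        by (simp add: qfac_Suc)
      finally show ?thesis .
    qed
  qed simp
qed simp

lemma gauss_binom_eq_div:
  assumes "norm p < 1" and "k \<le> n"
  shows "gauss_binom p n k = qfac p n / (qfac p k * qfac p (n - k))"
  using gauss_binom_mult_qfac[OF assms(2), of p] qfac_nonzero[OF assms(1)]
  by (simp add: field_simps)

lemma sum_gauss_binom_Suc:
  "(\<Sum>k\<le>Suc n. gauss_binom p (Suc n) k * t k)
     = (\<Sum>k\<le>n. gauss_binom p n k * (t (Suc k) + p ^ k * t k))"
proof -
  have shift: "(\<Sum>k\<le>Suc n. p ^ k * gauss_binom p n k * t k)
      = t 0 + (\<Sum>k\<le>n. p ^ Suc k * gauss_binom p n (Suc k) * t (Suc k))"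
    by (subst sum.atMost_Suc_shift) simp
  have "(\<Sum>k\<le>Suc n. gauss_binom p (Suc n) k * t k)
      = t 0 + (\<Sum>k\<le>n. gauss_binom p n k * t (Suc k))
          + (\<Sum>k\<le>n. p ^ Suc k * gauss_binom p n (Suc k) * t (Suc k))"
    by (subst sum.atMost_Suc_shift) (simp add: algebra_simps sum.distrib)
  also have "\<dots> = (\<Sum>k\<le>n. gauss_binom p n k * t (Suc k)) + (\<Sum>k\<le>n. p ^ k * gauss_binom p n k * t k)"
    using shift by (simp add: gauss_binom_eq_0)
  finally show ?thesis
    by (simp add: algebra_simps sum.distrib)
qed

theorem q_binomial_theorem:
  "(\<Prod>i<n. 1 + z * p ^ i) = (\<Sum>k\<le>n. gauss_binom p n k * p ^ (k choose 2) * z ^ k)"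
proof (induction n arbitrary: z)
  case (Suc n)
  have choose: "Suc k choose 2 = k + (k choose 2)" for k
    by (simp add: numeral_2_eq_2)
  have "(\<Prod>i<Suc n. 1 + z * p ^ i) = (1 + z) * (\<Prod>i<n. 1 + (z * p) * p ^ i)"
    by (subst prod.lessThan_Suc_shift) (simp add: mult.assoc)
  also have "\<dots> = (\<Sum>k\<le>n. gauss_binom p n k * ((1 + z) * p ^ (k choose 2) * (z * p) ^ k))"
    by (simp only: Suc.IH sum_distrib_left) (simp add: mult_ac)
  also have "\<dots> = (\<Sum>k\<le>n. gauss_binom p n k
      * (p ^ (Suc k choose 2) * z ^ Suc k + p ^ k * (p ^ (k choose 2) * z ^ k)))"
    by (simp add: choose power_add power_mult_distrib algebra_simps)
  also have "\<dots> = (\<Sum>k\<le>Suc n. gauss_binom p (Suc n) k * (p ^ (k choose 2) * z ^ k))"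
    by (rule sum_gauss_binom_Suc[symmetric])
  finally show ?case
    by (simp add: mult.assoc)
qed (simp add: binomial_eq_0)

section \<open>Bailey's lemma\<close>

text \<open>A limiting case of the \<open>q\<close>-Chu--Vandermonde summation.\<close>

lemma sum_gauss_binom_div_qfac:
  assumes "norm p < 1"
  shows "(\<Sum>k\<le>m. gauss_binom p m k * p ^ (k*k + A*k) / qfac p (A + k)) = 1 / qfac p (m + A)"
proof (induction m arbitrary: A)
  case (Suc m)
  have "(\<Sum>k\<le>Suc m. gauss_binom p (Suc m) k * (p ^ (k*k + A*k) / qfac p (A + k)))
     = (\<Sum>k\<le>m. gauss_binom p m k * (p ^ (Suc k*Suc k + A*Suc k) / qfac p (A + Suc k)
          + p ^ k * (p ^ (k*k + A*k) / qfac p (A + k))))"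
    by (rule sum_gauss_binom_Suc)
  also have "\<dots> = (\<Sum>k\<le>m. gauss_binom p m k * (p ^ (k*k + Suc A*k) / qfac p (Suc A + k)))"
  proof (rule sum.cong[OF refl])
    fix k
    define Z where "Z = p ^ (k*k + Suc A*k)"
    define P where "P = p ^ Suc (A + k)"
    have pow: "p ^ (Suc k*Suc k + A*Suc k) = Z * P"
      "p ^ k * (p ^ (k*k + A*k) / qfac p (A + k)) = Z / qfac p (A + k)"
      unfolding Z_def P_def by (simp_all flip: power_add add: algebra_simps)
    have fac: "qfac p (A + Suc k) = qfac p (A + k) * (1 - P)"
      "qfac p (Suc A + k) = qfac p (A + k) * (1 - P)"
      unfolding P_def by (simp_all add: qfac_Suc)
    have "qfac p (A + k) \<noteq> 0" and "1 - P \<noteq> 0"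
      using qfac_nonzero[OF assms, of "Suc (A + k)"] by (auto simp: qfac_Suc P_def)
    then show "gauss_binom p m k * (p ^ (Suc k*Suc k + A*Suc k) / qfac p (A + Suc k)
          + p ^ k * (p ^ (k*k + A*k) / qfac p (A + k)))
        = gauss_binom p m k * (p ^ (k*k + Suc A*k) / qfac p (Suc A + k))"
      unfolding pow fac Z_def[symmetric] by (simp add: field_simps)
  qed
  also have "\<dots> = 1 / qfac p (Suc m + A)"
    using Suc.IH[of "Suc A"] by simp
  finally show ?case
    by simp
qed simp

lemma bailey_kernel_nat:
  assumes "norm p < 1"
  shows "(\<Sum>K\<le>L. p ^ (K*(K+1)) * inv_qfac p (int L - int K) * inv_qfac p (int K - int r)
            * inv_qfac p (int K + int r + 1))
       = p ^ (r*(r+1)) * inv_qfac p (int L - int r) * inv_qfac p (int L + int r + 1)"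
    (is "(\<Sum>K\<le>L. ?f K) = _")
proof (cases "r \<le> L")
  case False
  then show ?thesis
    by (auto intro!: sum.neutral simp: inv_qfac_neg)
next
  case True
  define m where "m = L - r"
  have "(\<Sum>K\<le>L. ?f K) = (\<Sum>K\<in>{0+r..m+r}. ?f K)"
    unfolding m_def using True by (intro sum.mono_neutral_right) (auto simp: inv_qfac_neg)
  also have "\<dots> = (\<Sum>k\<le>m. p ^ (r*(r+1)) / qfac p m
      * (gauss_binom p m k * p ^ (k*k + (2*r+1)*k) / qfac p (2*r+1 + k)))"
    unfolding sum.shift_bounds_cl_nat_ivl atLeast0AtMost
  proof (rule sum.cong[OF refl])
    fix k
    assume "k \<in> {..m}"
    then have "k \<le> m" by simp
    have shift: "int L - int (k + r) = int (m - k)" "int (k + r) - int r = int k"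
      "int (k + r) + int r + 1 = int (2*r+1 + k)"
      using True \<open>k \<le> m\<close> by (auto simp: m_def)
    have "(k + r) * (k + r + 1) = r*(r+1) + (k*k + (2*r+1)*k)"
      by (simp add: algebra_simps mult_2)
    then have pow: "p ^ ((k + r) * (k + r + 1)) = p ^ (r*(r+1)) * p ^ (k*k + (2*r+1)*k)"
      by (simp only: power_add)
    show "?f (k + r) = p ^ (r*(r+1)) / qfac p m
        * (gauss_binom p m k * p ^ (k*k + (2*r+1)*k) / qfac p (2*r+1 + k))"
      unfolding shift pow inv_qfac_of_nat gauss_binom_eq_div[OF assms \<open>k \<le> m\<close>]
      using qfac_nonzero[OF assms] by (simp add: field_simps)
  qed
  also have "\<dots> = p ^ (r*(r+1)) / qfac p m * (1 / qfac p (m + (2*r+1)))"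
    by (simp only: sum_distrib_left[symmetric] sum_gauss_binom_div_qfac[OF assms])
  also have "\<dots> = p ^ (r*(r+1)) * inv_qfac p (int L - int r) * inv_qfac p (int L + int r + 1)"
  proof -
    have "int L - int r = int m" and "int L + int r + 1 = int (m + (2*r+1))"
      using True by (auto simp: m_def)
    then show ?thesis
      by (simp only: inv_qfac_of_nat) simp
  qed
  finally show ?thesis .
qed

lemma bailey_kernel:
  assumes "norm p < 1"
  shows "(\<Sum>K\<le>L. p ^ (K*(K+1)) * inv_qfac p (int L - int K) * inv_qfac p (int K - j)
            * inv_qfac p (int K + j + 1))
       = p ^ nat (j*(j+1)) * inv_qfac p (int L - j) * inv_qfac p (int L + j + 1)"
proof (cases "j \<ge> 0")
  case True
  then obtain r where j: "j = int r"
    using nonneg_eq_int by blast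
  then have "j*(j+1) = int (r*(r+1))"
    by (simp add: algebra_simps)
  then show ?thesis
    using bailey_kernel_nat[OF assms, of L r] by (simp only: j nat_int)
next
  case False
  \<comment> \<open>The kernel is invariant under \<open>j \<mapsto> -1 - j\<close>.\<close>
  define r where "r = nat (- j - 1)"
  with False have j: "j = - int r - 1"
    by simp
  have "j*(j+1) = int (r*(r+1))"
    unfolding j by (simp add: algebra_simps)
  moreover have "int K - j = int K + int r + 1" and "int K + j + 1 = int K - int r" for K :: nat
    using j by simp_all
  ultimately show ?thesis
    using bailey_kernel_nat[OF assms, of L r] by (simp only: nat_int) (simp add: mult_ac)
qed

text \<open>Bailey pairs relative to \<open>a = p\<close> in base \<open>p\<close>, up to the factor \<open>1 - p\<close>: the
  classical \<open>\<alpha>\<^sub>r\<close> is split over the integers as \<open>\<alpha> r + \<alpha> (-1 - r)\<close>.\<close>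

definition bailey_pair :: "complex \<Rightarrow> (int \<Rightarrow> complex) \<Rightarrow> (nat \<Rightarrow> complex) \<Rightarrow> bool" where
  "bailey_pair p \<alpha> \<beta> \<longleftrightarrow> (\<forall>K. \<beta> K =
     (\<Sum>j\<in>{-int K-1..int K}. \<alpha> j * inv_qfac p (int K - j) * inv_qfac p (int K + j + 1)))"

definition bailey_transform :: "complex \<Rightarrow> (nat \<Rightarrow> complex) \<Rightarrow> nat \<Rightarrow> complex" where
  "bailey_transform p \<beta> L = (\<Sum>K\<le>L. p ^ (K*(K+1)) * inv_qfac p (int L - int K) * \<beta> K)"

lemma bailey_transform_cong:
  "(\<And>K. K \<le> L \<Longrightarrow> \<beta> K = \<beta>' K) \<Longrightarrow> bailey_transform p \<beta> L = bailey_transform p \<beta>' L"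
  unfolding bailey_transform_def by (intro sum.cong) auto

lemma bailey_pair_sum_extend:
  assumes "bailey_pair p \<alpha> \<beta>" and "K \<le> L"
  shows "\<beta> K = (\<Sum>j\<in>{-int L-1..int L}. \<alpha> j * inv_qfac p (int K - j) * inv_qfac p (int K + j + 1))"
  using assms unfolding bailey_pair_def
  by (auto intro!: sum.mono_neutral_left simp: inv_qfac_neg)

theorem bailey_lemma:
  assumes "norm p < 1" and "bailey_pair p \<alpha> \<beta>"
  shows "bailey_pair p (\<lambda>j. p ^ nat (j*(j+1)) * \<alpha> j) (bailey_transform p \<beta>)"
  unfolding bailey_pair_def
proof
  fix L
  let ?J = "{-int L-1..int L}"
  have "bailey_transform p \<beta> L = (\<Sum>K\<le>L. \<Sum>j\<in>?J. \<alpha> j * (p ^ (K*(K+1)) * inv_qfac p (int L - int K)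
      * inv_qfac p (int K - j) * inv_qfac p (int K + j + 1)))"
    unfolding bailey_transform_def
    by (intro sum.cong refl) (simp add: bailey_pair_sum_extend[OF assms(2)] sum_distrib_left mult_ac)
  also have "\<dots> = (\<Sum>j\<in>?J. \<alpha> j * (\<Sum>K\<le>L. p ^ (K*(K+1)) * inv_qfac p (int L - int K)
      * inv_qfac p (int K - j) * inv_qfac p (int K + j + 1)))"
    by (simp add: sum.swap[of _ "{..L}"] sum_distrib_left)
  also have "\<dots> = (\<Sum>j\<in>?J. p ^ nat (j*(j+1)) * \<alpha> j * inv_qfac p (int L - j) * inv_qfac p (int L + j + 1))"
    by (simp only: bailey_kernel[OF assms(1)]) (simp add: mult_ac)
  finally show "bailey_transform p \<beta> L
      = (\<Sum>j\<in>?J. p ^ nat (j*(j+1)) * \<alpha> j * inv_qfac p (int L - j) * inv_qfac p (int L + j + 1))" .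
qed

corollary bailey_chain:
  assumes "norm p < 1" and "bailey_pair p \<alpha> \<beta>"
  shows "bailey_pair p (\<lambda>j. p ^ (n * nat (j*(j+1))) * \<alpha> j) ((bailey_transform p ^^ n) \<beta>)"
proof (induction n)
  case 0
  then show ?case
    using assms(2) by simp
next
  case (Suc n)
  then show ?case
    using bailey_lemma[OF assms(1) Suc.IH] by (simp add: power_add mult.assoc)
qed

section \<open>The finite Jacobi triple product\<close>

lemma double_choose_two: "2 * (k choose 2) + k = k * k"
  by (induction k) (simp_all add: numeral_2_eq_2)

lemma power_mult_inverse_power:
  fixes q y :: "'a::comm_monoid_mult"
  assumes "q * y = 1" and "b \<le> a"
  shows "q ^ a * y ^ b = q ^ (a - b)"
proof -
  have "q ^ a = q ^ (a - b) * q ^ b"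
    using assms(2) by (simp flip: power_add)
  moreover have "q ^ b * y ^ b = 1"
    using assms(1) by (simp flip: power_mult_distrib)
  ultimately show ?thesis
    by (simp add: mult.assoc)
qed

lemma prod_power_odd: "(\<Prod>i<K. (x::'a::comm_monoid_mult) ^ (2*i+1)) = x ^ (K*K)"
proof (induction K)
  case (Suc K)
  have "Suc K * Suc K = K*K + (2*K+1)"
    by simp
  with Suc show ?case
    by (simp only: prod.lessThan_Suc power_add)
qed simp

lemma prod_centered_factors:
  fixes q y w w' :: "'a::comm_ring_1"
  assumes qy: "q * y = 1" and ww: "w * w' = 1"
  shows "(\<Prod>i<2*K+1. 1 - w * q ^ (2*i+1) * y ^ (2*K))
       = (-w) ^ K * y ^ (K*K) * (1 - w * q ^ (2*K+1))
         * (\<Prod>i<K. (1 - w * q ^ (2*i+1)) * (1 - w' * q ^ (2*i+1)))"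
proof -
  define g where "g i = 1 - w * q ^ (2*i+1) * y ^ (2*K)" for i
  have "(\<Prod>i<2*K+1. g i) = (\<Prod>i<K. g i) * (\<Prod>i\<in>{K..<2*K+1}. g i)"
    unfolding lessThan_atLeast0 by (rule prod.atLeastLessThan_concat[symmetric]) simp_all
  also have "(\<Prod>i\<in>{K..<2*K+1}. g i) = (\<Prod>t<K+1. 1 - w * q ^ (2*t+1))"
  proof -
    have "g (t + K) = 1 - w * q ^ (2*t+1)" for t
      using power_mult_inverse_power[OF qy, of "2*K" "2*(t+K)+1"] by (simp add: g_def mult.assoc)
    moreover have "{K..<2*K+1} = {0+K..<(K+1)+K}"
      by (simp add: mult_2)
    ultimately show ?thesis
      by (simp only: prod.shift_bounds_nat_ivl lessThan_atLeast0)
  qed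
  also have "(\<Prod>i<K. g i) = (\<Prod>i<K. (-w) * y ^ (2*(K - Suc i)+1) * (1 - w' * q ^ (2*(K - Suc i)+1)))"
  proof (rule prod.cong[OF refl])
    fix i
    assume "i \<in> {..<K}"
    define m where "m = 2*(K - Suc i)+1"
    then have "2*K = (2*i+1) + m"
      using \<open>i \<in> {..<K}\<close> by simp
    then have "q ^ (2*i+1) * y ^ (2*K) = (q ^ (2*i+1) * y ^ (2*i+1)) * y ^ m"
      by (simp only: power_add mult.assoc)
    also have "q ^ (2*i+1) * y ^ (2*i+1) = 1"
      using power_mult_inverse_power[OF qy order_refl, of "2*i+1"] by (simp only: diff_self_eq_0 power_0)
    finally have "g i = 1 - w * y ^ m"
      unfolding g_def by (simp only: mult.assoc mult_1_left)
    moreover have "(-w) * y ^ m * (1 - w' * q ^ m) = (w * w') * (q ^ m * y ^ m) - w * y ^ m"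
      by (simp add: algebra_simps)
    ultimately show "g i = (-w) * y ^ m * (1 - w' * q ^ m)"
      using ww power_mult_inverse_power[OF qy order_refl, of m] by simp
  qed
  also have "\<dots> = (\<Prod>i<K. (-w) * y ^ (2*i+1) * (1 - w' * q ^ (2*i+1)))"
    by (rule prod.nat_diff_reindex)
  also have "\<dots> = (-w) ^ K * y ^ (K*K) * (\<Prod>i<K. 1 - w' * q ^ (2*i+1))"
    by (simp only: prod.distrib prod_constant card_lessThan prod_power_odd)
  finally show ?thesis
    by (simp add: g_def prod.distrib mult_ac)
qed

lemma two_mult_le_sum_squares: "2*a*b \<le> a*a + b*b" for a b :: nat
proof -
  have "int (2*a*b) \<le> int (a*a + b*b)"
    using zero_le_power2[of "int a - int b"] by (simp add: power2_eq_square algebra_simps)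
  then show ?thesis
    by linarith
qed

lemma nat_square_diff: "nat ((int a - int b)^2) = a*a + b*b - 2*a*b"
proof -
  have "int (a*a + b*b - 2*a*b) = (int a - int b)^2"
    using two_mult_le_sum_squares[of a b] by (simp add: of_nat_diff power2_eq_square algebra_simps)
  then show ?thesis
    by (metis nat_int)
qed

theorem finite_jacobi_triple_product:
  fixes q w w' :: "'a::field"
  assumes ww: "w * w' = 1"
  shows "(\<Sum>k\<le>2*K+1. gauss_binom (q^2) (2*K+1) k * ((-w)^k * (-w')^K * q ^ nat ((int K - int k)^2)))
       = (1 - w * q ^ (2*K+1)) * (\<Prod>i<K. (1 - w * q ^ (2*i+1)) * (1 - w' * q ^ (2*i+1)))"
proof (cases "q = 0")
  case True
  have "(-w)^K * (-w')^K = 1"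
    using ww by (simp flip: power_mult_distrib)
  then have "gauss_binom (q^2) (2*K+1) k * ((-w)^k * (-w')^K * q ^ nat ((int K - int k)^2))
      = (if k = K then 1 else 0)" for k
    using True by (simp add: gauss_binom_at_0)
  with True show ?thesis
    by simp
next
  case False
  \<comment> \<open>Put \<open>z = -w q\<^bsup>1-2K\<^esup>\<close> in the \<open>q\<close>-binomial theorem in base \<open>q\<^sup>2\<close>; its first \<open>K\<close> factors
    then become the factors involving \<open>w'\<close>.\<close>
  define y where "y = inverse q"
  define z where "z = - w * q * y ^ (2*K)"
  have qy: "q * y = 1"
    using False by (simp add: y_def)
  have binomial: "(\<Sum>k\<le>2*K+1. gauss_binom (q^2) (2*K+1) k * (q^2) ^ (k choose 2) * z ^ k)
      = (-w) ^ K * y ^ (K*K) * ((1 - w * q ^ (2*K+1))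
         * (\<Prod>i<K. (1 - w * q ^ (2*i+1)) * (1 - w' * q ^ (2*i+1))))"
  proof -
    have "(\<Sum>k\<le>2*K+1. gauss_binom (q^2) (2*K+1) k * (q^2) ^ (k choose 2) * z ^ k)
        = (\<Prod>i<2*K+1. 1 + z * (q^2) ^ i)"
      by (rule q_binomial_theorem[symmetric])
    also have "\<dots> = (\<Prod>i<2*K+1. 1 - w * q ^ (2*i+1) * y ^ (2*K))"
      by (intro prod.cong refl) (simp add: z_def algebra_simps flip: power_mult)
    finally show ?thesis
      using prod_centered_factors[OF qy ww] by (simp only: mult.assoc)
  qed
  have summand: "(q^2) ^ (k choose 2) * z ^ k * ((-w') ^ K * q ^ (K*K))
      = (-w)^k * (-w')^K * q ^ nat ((int K - int k)^2)" for k
  proof -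
    have "(q^2) ^ (k choose 2) * z ^ k * ((-w') ^ K * q ^ (K*K))
        = (-w)^k * (-w')^K * (q ^ (K*K + (2 * (k choose 2) + k)) * y ^ (2*K*k))"
    proof -
      have "z ^ k = (-w)^k * q^k * y^(2*K*k)" and "(q^2) ^ (k choose 2) = q ^ (2 * (k choose 2))"
        unfolding z_def by (simp_all only: power_mult_distrib power_mult)
      then show ?thesis
        by (simp only: power_add mult_ac)
    qed
    also have "\<dots> = (-w)^k * (-w')^K * (q ^ (K*K + k*k) * y ^ (2*K*k))"
      by (simp only: double_choose_two)
    also have "\<dots> = (-w)^k * (-w')^K * q ^ nat ((int K - int k)^2)"
      by (simp add: nat_square_diff power_mult_inverse_power[OF qy two_mult_le_sum_squares])
    finally show ?thesis .
  qed
  have "(\<Sum>k\<le>2*K+1. gauss_binom (q^2) (2*K+1) k * ((-w)^k * (-w')^K * q ^ nat ((int K - int k)^2)))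
      = (\<Sum>k\<le>2*K+1. gauss_binom (q^2) (2*K+1) k * (q^2) ^ (k choose 2) * z ^ k)
        * ((-w') ^ K * q ^ (K*K))"
    unfolding summand[symmetric] by (simp only: sum_distrib_right mult.assoc)
  also have "\<dots> = ((-w) ^ K * (-w') ^ K) * (y ^ (K*K) * q ^ (K*K)) * ((1 - w * q ^ (2*K+1))
         * (\<Prod>i<K. (1 - w * q ^ (2*i+1)) * (1 - w' * q ^ (2*i+1))))"
    unfolding binomial by (simp only: mult_ac)
  also have "(-w) ^ K * (-w') ^ K = 1"
    using ww by (simp flip: power_mult_distrib)
  also have "y ^ (K*K) * q ^ (K*K) = 1"
    using qy by (simp add: mult.commute flip: power_mult_distrib)
  finally show ?thesis
    by simp
qed

section \<open>The seed Bailey pair\<close>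

definition \<omega> :: complex where
  "\<omega> = Complex (-1/2) (sqrt 3 / 2)"

lemma omega_squared: "\<omega>^2 = Complex (-1/2) (- sqrt 3 / 2)"
  by (simp add: \<omega>_def complex_eq_iff power2_eq_square)

lemma omega_cubed: "\<omega>^3 = 1"
proof -
  have "\<omega>^3 = \<omega> * \<omega>^2"
    by (simp add: power3_eq_cube power2_eq_square)
  then show ?thesis
    unfolding omega_squared by (simp add: \<omega>_def complex_eq_iff)
qed

lemma omega_sum: "\<omega> + \<omega>^2 = -1"
  unfolding omega_squared by (simp add: \<omega>_def complex_eq_iff)

lemma omega_squared_ne: "\<omega>^2 \<noteq> \<omega>"
  unfolding omega_squared by (simp add: \<omega>_def complex_eq_iff)

lemma Legendre_3: "Legendre m 3 = (if m mod 3 = 0 then 0 else if m mod 3 = 1 then 1 else -1)"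
proof -
  have "[Legendre m 3 = m] (mod 3)"
    using euler_criterion[of 3 m] by simp
  moreover have "Legendre m 3 \<in> {-1, 0, 1}"
    by (simp add: Legendre_def)
  ultimately show ?thesis
    unfolding cong_def by auto
qed

lemma omega_powi: "\<omega> powi d = \<omega> ^ nat (d mod 3)"
proof -
  have "\<omega> \<noteq> 0"
    using omega_cubed by auto
  have "\<omega> powi d = \<omega> powi (3 * (d div 3)) * \<omega> powi (d mod 3)"
    using power_int_add[of \<omega> "3 * (d div 3)" "d mod 3"] \<open>\<omega> \<noteq> 0\<close> by simp
  also have "\<omega> powi (3 * (d div 3)) = 1"
    by (simp only: power_int_mult) (simp add: omega_cubed)
  also have "\<omega> powi (d mod 3) = \<omega> ^ nat (d mod 3)"
    by (simp add: power_int_def)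
  finally show ?thesis
    by simp
qed

lemma omega_powi_character: "\<omega> powi (-d) - \<omega> powi d = (\<omega>^2 - \<omega>) * of_int (Legendre d 3)"
proof -
  have "0 \<le> d mod 3" and "d mod 3 < 3"
    by simp_all
  then consider "d mod 3 = 0" | "d mod 3 = 1" | "d mod 3 = 2"
    by linarith
  then show ?thesis
    by cases (simp_all add: omega_powi zmod_zminus1_eq_if Legendre_3 nat_diff_distrib)
qed

lemma omega_character:
  "\<omega>^2 * ((-\<omega>)^k * (- (\<omega>^2))^K) - \<omega> * ((- (\<omega>^2))^k * (-\<omega>)^K)
     = (-1)^(k+K) * (\<omega>^2 - \<omega>) * of_int (Legendre (int K - int k + 1) 3)"
proof -
  define d where "d = int K - int k + 1"
  have powi: "\<omega> ^ n = \<omega> powi e" if "int n mod 3 = e mod 3" for n e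
    using omega_powi[of "int n"] omega_powi[of e] that by simp
  have signs: "(-\<omega>)^n = (-1)^n * \<omega>^n" "(- (\<omega>^2))^n = (-1)^n * \<omega>^(2*n)" for n
    by (simp_all only: power_minus[of \<omega>] power_minus[of "\<omega>^2"] power_mult)
  have "int (k + 2*K + 2) = -d + 3 * (int K + 1)" and "int (2*k + K + 1) = d + 3 * int k"
    by (simp_all add: d_def)
  then have "\<omega>^(k + 2*K + 2) = \<omega> powi (-d)" and "\<omega>^(2*k + K + 1) = \<omega> powi d"
    by (simp_all only: powi mod_mult_self2)
  moreover have "\<omega>^2 * ((-\<omega>)^k * (- (\<omega>^2))^K) - \<omega> * ((- (\<omega>^2))^k * (-\<omega>)^K)
      = (-1)^(k+K) * (\<omega>^(k + 2*K + 2) - \<omega>^(2*k + K + 1))"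
    unfolding signs power_add by (simp only: power_one_right right_diff_distrib mult_ac)
  ultimately show ?thesis
    using omega_powi_character[of d] by (simp only: d_def mult.assoc)
qed

lemma omega_times_omega_squared: "\<omega> * \<omega>^2 = 1"
  using omega_cubed by (simp add: power3_eq_cube power2_eq_square mult.assoc)

lemma cyclotomic3_factor: "(1 - \<omega> * x) * (1 - \<omega>^2 * x) = 1 + x + x^2"
proof -
  have "(1 - \<omega> * x) * (1 - \<omega>^2 * x) = 1 - (\<omega> + \<omega>^2) * x + (\<omega> * \<omega>^2) * x^2"
    by (simp add: algebra_simps power2_eq_square)
  then show ?thesis
    by (simp add: omega_sum omega_times_omega_squared)
qed

lemma prod_cyclotomic3_expansion:
  fixes q :: complex
  shows "(\<Prod>i<K. 1 + q ^ (2*i+1) + q ^ (4*i+2))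
       = (\<Sum>k\<le>2*K+1. gauss_binom (q^2) (2*K+1) k * ((-1) ^ (k+K) * q ^ nat ((int K - int k)^2)
           * of_int (Legendre (int K - int k + 1) 3)))"
    (is "?P = (\<Sum>k\<le>2*K+1. ?G k * ((-1) ^ (k+K) * ?Q k * ?\<chi> k))")
proof -
  note \<omega>\<omega> = omega_times_omega_squared
  have factor: "(1 - \<omega> * q ^ (2*i+1)) * (1 - \<omega>^2 * q ^ (2*i+1)) = 1 + q ^ (2*i+1) + q ^ (4*i+2)"
    for i
  proof -
    have "(2*i+1)*2 = 4*i+2"
      by simp
    then have "q ^ (4*i+2) = (q ^ (2*i+1))^2"
      by (simp only: power_mult[symmetric])
    then show ?thesis
      by (simp only: cyclotomic3_factor)
  qed
  have "\<omega>^2 * \<omega> = 1" and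
    prods: "(\<Prod>i<K. (1 - \<omega> * q ^ (2*i+1)) * (1 - \<omega>^2 * q ^ (2*i+1))) = ?P"
      "(\<Prod>i<K. (1 - \<omega>^2 * q ^ (2*i+1)) * (1 - \<omega> * q ^ (2*i+1))) = ?P"
    using \<omega>\<omega> factor by (simp_all only: mult.commute)
  then have jtp: "(\<Sum>k\<le>2*K+1. ?G k * ((-\<omega>)^k * (- (\<omega>^2))^K * ?Q k)) = (1 - \<omega> * q ^ (2*K+1)) * ?P"
    "(\<Sum>k\<le>2*K+1. ?G k * ((- (\<omega>^2))^k * (-\<omega>)^K * ?Q k)) = (1 - \<omega>^2 * q ^ (2*K+1)) * ?P"
    by (simp_all only: finite_jacobi_triple_product[where w = \<omega> and w' = "\<omega>^2", OF \<omega>\<omega>]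
        finite_jacobi_triple_product[where w = "\<omega>^2" and w' = \<omega>, OF \<open>\<omega>^2 * \<omega> = 1\<close>])
  have "(\<omega>^2 - \<omega>) * ?P = \<omega>^2 * ((1 - \<omega> * q ^ (2*K+1)) * ?P) - \<omega> * ((1 - \<omega>^2 * q ^ (2*K+1)) * ?P)"
    by (simp add: algebra_simps)
  also have "\<dots> = (\<Sum>k\<le>2*K+1. ?G k * ?Q k
      * (\<omega>^2 * ((-\<omega>)^k * (- (\<omega>^2))^K) - \<omega> * ((- (\<omega>^2))^k * (-\<omega>)^K)))"
    unfolding jtp[symmetric] sum_distrib_left sum_subtractf[symmetric]
    by (intro sum.cong refl) (simp add: algebra_simps)
  also have "\<dots> = (\<omega>^2 - \<omega>) * (\<Sum>k\<le>2*K+1. ?G k * ((-1) ^ (k+K) * ?Q k * ?\<chi> k))"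
    unfolding omega_character sum_distrib_left by (intro sum.cong refl) (simp add: mult_ac)
  finally show ?thesis
    using omega_squared_ne by simp
qed

definition seed_alpha :: "complex \<Rightarrow> int \<Rightarrow> complex" where
  "seed_alpha q j = (-1) ^ nat \<bar>j\<bar> * q ^ nat (j^2) * of_int (Legendre (j + 1) 3)"

definition seed_beta :: "complex \<Rightarrow> nat \<Rightarrow> complex" where
  "seed_beta q K = qpoch (q^3) (q^6) K / qpoch q (q^2) K / qfac (q^2) (2*K+1)"

lemma qpoch_cube_ratio:
  assumes "norm q < 1"
  shows "qpoch (q^3) (q^6) K / qpoch q (q^2) K = (\<Prod>i<K. 1 + q ^ (2*i+1) + q ^ (4*i+2))"
  unfolding qpoch_def prod_dividef[symmetric]
proof (rule prod.cong[OF refl])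
  fix i
  define x where "x = q ^ (2*i+1)"
  have x3: "q^3 * (q^6)^i = x^3"
    unfolding x_def by (simp only: power_mult[symmetric] power_add[symmetric]) (simp add: algebra_simps)
  have x1: "q * (q^2)^i = x"
    unfolding x_def by (simp only: power_mult[symmetric] power_Suc[symmetric]) simp
  have x2: "q ^ (4*i+2) = x^2"
    unfolding x_def by (simp only: power_mult[symmetric]) (simp add: algebra_simps)
  have "norm x < 1"
    unfolding x_def using assms by (rule norm_power_less_one) simp
  then have "x \<noteq> 1"
    by auto
  then have "(1 - x^3) / (1 - x) = 1 + x + x^2"
    by (simp add: field_simps power2_eq_square power3_eq_cube algebra_simps)
  then show "(1 - q^3 * (q^6)^i) / (1 - q * (q^2)^i) = 1 + q ^ (2*i+1) + q ^ (4*i+2)"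
    unfolding x3 x1 x2 by (simp add: x_def)
qed

lemma minus_one_power_abs_diff: "(-1::'a::ring_1) ^ nat \<bar>int K - int k\<bar> = (-1) ^ (k + K)"
proof -
  have "k + K = nat \<bar>int K - int k\<bar> + 2 * min k K"
    by (simp add: min_def) linarith
  then show ?thesis
    by (simp add: power_add power_mult)
qed

lemma bailey_pair_seed:
  assumes "norm q < 1"
  shows "bailey_pair (q^2) (seed_alpha q) (seed_beta q)"
  unfolding bailey_pair_def
proof
  fix K
  have "norm (q^2) < 1"
    using assms by (rule norm_power_less_one) simp
  note qfac_nz = qfac_nonzero[OF this]
  define f where "f j = seed_alpha q j * inv_qfac (q^2) (int K - j) * inv_qfac (q^2) (int K + j + 1)" for j
  have "(\<Sum>j\<in>{-int K-1..int K}. f j) = (\<Sum>k\<le>2*K+1. f (int K - int k))"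
    by (rule sum.reindex_bij_witness[where i="\<lambda>k. int K - int k" and j="\<lambda>j. nat (int K - j)"]) auto
  also have "\<dots> = (\<Sum>k\<le>2*K+1. 1 / qfac (q^2) (2*K+1) * (gauss_binom (q^2) (2*K+1) k
      * ((-1) ^ (k+K) * q ^ nat ((int K - int k)^2) * of_int (Legendre (int K - int k + 1) 3))))"
  proof (rule sum.cong[OF refl])
    fix k
    assume "k \<in> {..2*K+1}"
    then have "k \<le> 2*K+1"
      by simp
    have shift: "int K - (int K - int k) = int k" "int K + (int K - int k) + 1 = int (2*K+1-k)"
      using \<open>k \<le> 2*K+1\<close> by auto
    have alpha: "seed_alpha q (int K - int k)
        = (-1) ^ (k+K) * q ^ nat ((int K - int k)^2) * of_int (Legendre (int K - int k + 1) 3)"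
      by (simp add: seed_alpha_def minus_one_power_abs_diff)
    show "f (int K - int k) = 1 / qfac (q^2) (2*K+1) * (gauss_binom (q^2) (2*K+1) k
        * ((-1) ^ (k+K) * q ^ nat ((int K - int k)^2) * of_int (Legendre (int K - int k + 1) 3)))"
      unfolding f_def shift alpha inv_qfac_of_nat gauss_binom_eq_div[OF \<open>norm (q^2) < 1\<close> \<open>k \<le> 2*K+1\<close>]
      using qfac_nz by (simp add: field_simps)
  qed
  also have "\<dots> = 1 / qfac (q^2) (2*K+1) * (\<Prod>i<K. 1 + q ^ (2*i+1) + q ^ (4*i+2))"
    by (simp only: sum_distrib_left[symmetric] prod_cyclotomic3_expansion)
  also have "\<dots> = seed_beta q K"
    by (simp add: seed_beta_def qpoch_cube_ratio[OF assms])
  finally show "seed_beta q K = (\<Sum>j\<in>{-int K-1..int K}. seed_alpha q j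
      * inv_qfac (q^2) (int K - j) * inv_qfac (q^2) (int K + j + 1))"
    unfolding f_def ..
qed

section \<open>The multisum\<close>

definition bounded_lists :: "nat \<Rightarrow> nat \<Rightarrow> nat list set" where
  "bounded_lists v L = {ns. set ns \<subseteq> {..L} \<and> length ns = v}"

lemma finite_bounded_lists: "finite (bounded_lists v L)"
  unfolding bounded_lists_def by (rule finite_lists_length_eq) simp

lemma sum_bounded_lists_Suc:
  "(\<Sum>ns\<in>bounded_lists (Suc v) L. F ns) = (\<Sum>ns\<in>bounded_lists v L. \<Sum>x\<le>L. F (x # ns))"
proof -
  have "(\<Sum>ns\<in>bounded_lists (Suc v) L. F ns)
      = (\<Sum>ns\<in>(\<lambda>(xs, n). n # xs) ` (bounded_lists v L \<times> {..L}). F ns)"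
    unfolding bounded_lists_def by (simp only: lists_length_Suc_eq)
  also have "\<dots> = (\<Sum>(ns, x)\<in>bounded_lists v L \<times> {..L}. F (x # ns))"
    by (subst sum.reindex) (auto simp: inj_on_def intro!: sum.cong)
  finally show ?thesis
    by (simp add: sum.cartesian_product)
qed

lemma sum_list_gt_if_not_bounded:
  "length ns = v \<Longrightarrow> ns \<notin> bounded_lists v L \<Longrightarrow> L < sum_list ns"
  unfolding bounded_lists_def using member_le_sum_list[of _ ns] by (force simp: subset_iff not_le)

lemma sum_bounded_lists_mono:
  assumes "K \<le> L"
  shows "(\<Sum>ns\<in>bounded_lists v K. F ns * inv_qfac p (int K - int (sum_list ns)))
       = (\<Sum>ns\<in>bounded_lists v L. F ns * inv_qfac p (int K - int (sum_list ns)))"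
proof (rule sum.mono_neutral_left[OF finite_bounded_lists])
  show "bounded_lists v K \<subseteq> bounded_lists v L"
    using assms unfolding bounded_lists_def by auto
  show "\<forall>ns\<in>bounded_lists v L - bounded_lists v K. F ns * inv_qfac p (int K - int (sum_list ns)) = 0"
  proof
    fix ns
    assume "ns \<in> bounded_lists v L - bounded_lists v K"
    then have "K < sum_list ns"
      by (intro sum_list_gt_if_not_bounded) (auto simp: bounded_lists_def)
    then show "F ns * inv_qfac p (int K - int (sum_list ns)) = 0"
      by (simp add: inv_qfac_neg)
  qed
qed

definition multisum_term :: "complex \<Rightarrow> nat list \<Rightarrow> complex" where
  "multisum_term q ns = (let v = length ns; p = q^2; N = (\<lambda>i. \<Sum>k=i..<v. ns ! k) in
     p ^ (\<Sum>i<v. N i * (N i + 1)) / ((\<Prod>i<v - 1. qfac p (ns ! i)) * qfac p (2 * ns ! (v - 1) + 1))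
     * (qpoch (q^3) (q^6) (ns ! (v - 1)) / qpoch q (q^2) (ns ! (v - 1))))"

lemma multisum_term_singleton: "multisum_term q [n] = (q^2) ^ (n*(n+1)) * seed_beta q n"
  by (simp add: multisum_term_def seed_beta_def Let_def)

lemma multisum_term_Cons:
  assumes "ns \<noteq> []"
  shows "multisum_term q (x # ns)
       = (q^2) ^ ((x + sum_list ns) * (x + sum_list ns + 1)) / qfac (q^2) x * multisum_term q ns"
proof -
  define v where "v = length ns"
  have v: "v = Suc (v - 1)"
    using assms by (simp add: v_def)
  define N where "N i = (\<Sum>k=i..<Suc v. (x # ns) ! k)" for i
  define N' where "N' i = (\<Sum>k=i..<v. ns ! k)" for i
  have "N 0 = sum_list (x # ns)"
    unfolding N_def v_def by (simp only: sum_list_sum_nth length_Cons)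
  then have "N 0 = x + sum_list ns"
    by simp
  moreover have "N (Suc i) = N' i" for i
    unfolding N_def N'_def by (simp only: sum.shift_bounds_Suc_ivl nth_Cons_Suc)
  ultimately have sum: "(\<Sum>i<Suc v. N i * (N i + 1))
      = (x + sum_list ns) * (x + sum_list ns + 1) + (\<Sum>i<v. N' i * (N' i + 1))"
    by (simp only: sum.lessThan_Suc_shift)
  have prod: "(\<Prod>i<v. qfac (q^2) ((x # ns) ! i)) = qfac (q^2) x * (\<Prod>i<v - 1. qfac (q^2) (ns ! i))"
    by (subst v, subst prod.lessThan_Suc_shift) simp
  have last: "(x # ns) ! v = ns ! (v - 1)"
    by (subst v) simp
  have "multisum_term q (x # ns) = (q^2) ^ (\<Sum>i<Suc v. N i * (N i + 1))
      / ((\<Prod>i<v. qfac (q^2) ((x # ns) ! i)) * qfac (q^2) (2 * (x # ns) ! v + 1))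
      * (qpoch (q^3) (q^6) ((x # ns) ! v) / qpoch q (q^2) ((x # ns) ! v))"
    unfolding multisum_term_def N_def v_def by (simp add: Let_def)
  also have "\<dots> = (q^2) ^ ((x + sum_list ns) * (x + sum_list ns + 1)) / qfac (q^2) x
      * ((q^2) ^ (\<Sum>i<v. N' i * (N' i + 1))
         / ((\<Prod>i<v - 1. qfac (q^2) (ns ! i)) * qfac (q^2) (2 * ns ! (v - 1) + 1))
         * (qpoch (q^3) (q^6) (ns ! (v - 1)) / qpoch q (q^2) (ns ! (v - 1))))"
    unfolding sum prod last power_add by (simp add: mult_ac)
  also have "\<dots> = (q^2) ^ ((x + sum_list ns) * (x + sum_list ns + 1)) / qfac (q^2) x * multisum_term q ns"
    unfolding multisum_term_def N'_def v_def by (simp add: Let_def)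
  finally show ?thesis .
qed

lemma sum_shift_eq_bailey_transform:
  "(\<Sum>x\<le>L. p ^ ((x+S)*(x+S+1)) / qfac p x * inv_qfac p (int L - int (x+S)))
     = bailey_transform p (\<lambda>K. inv_qfac p (int K - int S)) L"
proof (cases "S \<le> L")
  case True
  have "(\<Sum>K\<le>L. p ^ (K*(K+1)) * inv_qfac p (int L - int K) * inv_qfac p (int K - int S))
      = (\<Sum>K\<in>{0+S..(L-S)+S}. p ^ (K*(K+1)) * inv_qfac p (int L - int K) * inv_qfac p (int K - int S))"
    using True by (intro sum.mono_neutral_right) (auto simp: inv_qfac_neg)
  also have "\<dots> = (\<Sum>x\<le>L-S. p ^ ((x+S)*(x+S+1)) / qfac p x * inv_qfac p (int L - int (x+S)))"
    unfolding sum.shift_bounds_cl_nat_ivl atLeast0AtMost by (simp add: mult_ac)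
  also have "\<dots> = (\<Sum>x\<le>L. p ^ ((x+S)*(x+S+1)) / qfac p x * inv_qfac p (int L - int (x+S)))"
    by (intro sum.mono_neutral_left) (auto simp: inv_qfac_neg)
  finally show ?thesis
    by (simp only: bailey_transform_def)
qed (simp add: bailey_transform_def inv_qfac_neg)

lemma multisum_eq_bailey_iterate:
  assumes "1 \<le> v"
  shows "(\<Sum>ns\<in>bounded_lists v L. multisum_term q ns * inv_qfac (q^2) (int L - int (sum_list ns)))
       = (bailey_transform (q^2) ^^ v) (seed_beta q) L"
  using assms
proof (induction v arbitrary: L rule: nat_induct_at_least)
  case base
  have "bounded_lists 0 L = {[]}"
    by (auto simp: bounded_lists_def)
  then show ?case
    by (simp add: sum_bounded_lists_Suc multisum_term_singleton bailey_transform_def mult_ac)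
next
  case (Suc v)
  define \<beta> where "\<beta> K = (\<Sum>ns\<in>bounded_lists v L. multisum_term q ns
      * inv_qfac (q^2) (int K - int (sum_list ns)))" for K
  have "(\<Sum>ns\<in>bounded_lists (Suc v) L. multisum_term q ns * inv_qfac (q^2) (int L - int (sum_list ns)))
      = (\<Sum>ns\<in>bounded_lists v L. multisum_term q ns * (\<Sum>x\<le>L. (q^2) ^ ((x + sum_list ns)
          * (x + sum_list ns + 1)) / qfac (q^2) x * inv_qfac (q^2) (int L - int (x + sum_list ns))))"
    unfolding sum_bounded_lists_Suc
  proof (rule sum.cong[OF refl])
    fix ns
    assume "ns \<in> bounded_lists v L"
    then have "ns \<noteq> []"
      using Suc.hyps by (auto simp: bounded_lists_def)
    then show "(\<Sum>x\<le>L. multisum_term q (x # ns) * inv_qfac (q^2) (int L - int (sum_list (x # ns))))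
        = multisum_term q ns * (\<Sum>x\<le>L. (q^2) ^ ((x + sum_list ns) * (x + sum_list ns + 1))
          / qfac (q^2) x * inv_qfac (q^2) (int L - int (x + sum_list ns)))"
      by (simp add: multisum_term_Cons sum_distrib_left mult_ac)
  qed
  also have "\<dots> = (\<Sum>ns\<in>bounded_lists v L. multisum_term q ns
      * bailey_transform (q^2) (\<lambda>K. inv_qfac (q^2) (int K - int (sum_list ns))) L)"
    by (simp only: sum_shift_eq_bailey_transform)
  also have "\<dots> = bailey_transform (q^2) \<beta> L"
    by (simp add: bailey_transform_def \<beta>_def sum_distrib_left sum.swap[of _ "bounded_lists v L"] mult_ac)
  also have "\<dots> = bailey_transform (q^2) ((bailey_transform (q^2) ^^ v) (seed_beta q)) L"
    by (rule bailey_transform_cong) (simp add: \<beta>_def Suc.IH flip: sum_bounded_lists_mono)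
  finally show ?case
    by simp
qed

lemma infsum_lists_eq_sum_bounded_lists:
  assumes "\<And>ns. length ns = v \<Longrightarrow> L < sum_list ns \<Longrightarrow> G ns = 0"
  shows "(\<Sum>\<^sub>\<infinity>ns\<in>{ns. length ns = v}. G ns) = (\<Sum>ns\<in>bounded_lists v L. G ns)"
proof -
  have "(\<Sum>\<^sub>\<infinity>ns\<in>{ns. length ns = v}. G ns) = (\<Sum>\<^sub>\<infinity>ns\<in>bounded_lists v L. G ns)"
    by (rule infsum_cong_neutral)
      (auto simp: bounded_lists_def intro!: assms sum_list_gt_if_not_bounded)
  then show ?thesis
    by (simp add: finite_bounded_lists)
qed

lemma qbinom_eq_inv_qfac:
  "qbinom p (2 * int L + 1) (int L - j)
     = qfac p (2*L+1) * inv_qfac p (int L - j) * inv_qfac p (int L + j + 1)"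
proof (cases "0 \<le> int L - j \<and> int L - j \<le> 2 * int L + 1")
  case True
  then have "int L - j = int (nat (int L - j))" and "int L + j + 1 = int (nat (int L + j + 1))"
    and "nat (2 * int L + 1 - (int L - j)) = nat (int L + j + 1)" and "nat (2 * int L + 1) = 2*L+1"
    by auto
  with True show ?thesis
    unfolding qbinom_def
    by (metis (no_types, lifting) divide_divide_eq_left inv_qfac_of_nat times_divide_eq_right mult_1_right)
qed (auto simp: qbinom_def inv_qfac_neg)

lemma infsum_qbinom:
  "(\<Sum>\<^sub>\<infinity>j\<in>UNIV. \<alpha> j * qbinom p (2 * int L + 1) (int L - j))
     = qfac p (2*L+1) * (\<Sum>j\<in>{-int L-1..int L}. \<alpha> j * inv_qfac p (int L - j) * inv_qfac p (int L + j + 1))"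
proof -
  have "(\<Sum>\<^sub>\<infinity>j\<in>UNIV. \<alpha> j * qbinom p (2 * int L + 1) (int L - j))
      = (\<Sum>\<^sub>\<infinity>j\<in>{-int L-1..int L}. \<alpha> j * qbinom p (2 * int L + 1) (int L - j))"
    by (rule infsum_cong_neutral) (auto simp: qbinom_def)
  also have "\<dots> = (\<Sum>j\<in>{-int L-1..int L}. \<alpha> j
      * (qfac p (2*L+1) * inv_qfac p (int L - j) * inv_qfac p (int L + j + 1)))"
    by (simp only: qbinom_eq_inv_qfac infsum_finite[OF finite_atLeastAtMost_int])
  finally show ?thesis
    by (simp add: sum_distrib_left mult_ac)
qed

lemma power_int_chain_exponent:
  fixes q :: complex
  shows "q powi ((2 * int v + 1) * j^2 + 2 * int v * j) = (q^2) ^ (v * nat (j*(j+1))) * q ^ nat (j^2)"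
proof -
  have "0 \<le> j*(j+1)"
    by (simp add: zero_le_mult_iff) arith
  moreover have "(2 * int v + 1) * j^2 + 2 * int v * j = 2 * int v * (j*(j+1)) + j^2"
    by (simp add: algebra_simps power2_eq_square)
  ultimately have "nat ((2 * int v + 1) * j^2 + 2 * int v * j) = 2 * (v * nat (j*(j+1))) + nat (j^2)"
    by (simp add: nat_add_distrib nat_mult_distrib)
  moreover have "0 \<le> (2 * int v + 1) * j^2 + 2 * int v * j"
    using \<open>0 \<le> j*(j+1)\<close> \<open>(2 * int v + 1) * j^2 + 2 * int v * j = _\<close> by simp
  ultimately show ?thesis
    by (simp add: power_int_def power_add power_mult)
qed

corollary bailey_pair_iterated_seed:
  assumes "norm q < 1"
  shows "bailey_pair (q^2)
           (\<lambda>j. (-1) ^ nat \<bar>j\<bar> * q powi ((2 * int v + 1) * j^2 + 2 * int v * j)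
              * of_int (Legendre (j + 1) 3))
           ((bailey_transform (q^2) ^^ v) (seed_beta q))"
proof -
  have "norm (q^2) < 1"
    using assms by (rule norm_power_less_one) simp
  from bailey_chain[OF this bailey_pair_seed[OF assms], of v] show ?thesis
    unfolding power_int_chain_exponent seed_alpha_def by (simp add: mult_ac)
qed

theorem mainTheorem15:
  fixes q :: complex and v L :: nat
  assumes "norm q < 1" and "v \<ge> 1"
  shows "(\<Sum>\<^sub>\<infinity> ns \<in> {ns :: nat list. length ns = v}.
            let qt = q ^ 2; N = (\<lambda>i. \<Sum>k=i..<v. ns ! k) in
            qt ^ (\<Sum>i<v. N i * (N i + 1))
            / ((\<Prod>i<v - 1. qfac qt (ns ! i)) * qfac qt (2 * ns ! (v - 1) + 1))
            * (qpoch (q ^ 3) (q ^ 6) (ns ! (v - 1)) / qpoch q (q ^ 2) (ns ! (v - 1)))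
            * (qfac qt (2 * L + 1) * inv_qfac qt (int L - int (N 0))))
       = (\<Sum>\<^sub>\<infinity> j \<in> (UNIV :: int set).
            (-1) ^ nat \<bar>j\<bar> * q powi ((2 * int v + 1) * j ^ 2 + 2 * int v * j)
            * of_int (Legendre (j + 1) 3) * qbinom (q ^ 2) (2 * int L + 1) (int L - j))"
proof -
  have "(\<Sum>\<^sub>\<infinity>ns\<in>{ns. length ns = v}.
          qfac (q^2) (2*L+1) * (multisum_term q ns * inv_qfac (q^2) (int L - int (sum_list ns))))
      = qfac (q^2) (2*L+1)
        * (\<Sum>ns\<in>bounded_lists v L. multisum_term q ns * inv_qfac (q^2) (int L - int (sum_list ns)))"
    by (subst infsum_lists_eq_sum_bounded_lists[where L = L]) (auto simp: inv_qfac_neg sum_distrib_left)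
  also have "\<dots> = qfac (q^2) (2*L+1) * (bailey_transform (q^2) ^^ v) (seed_beta q) L"
    using assms(2) by (simp only: multisum_eq_bailey_iterate)
  also have "\<dots> = qfac (q^2) (2*L+1) * (\<Sum>j\<in>{-int L-1..int L}.
      (-1) ^ nat \<bar>j\<bar> * q powi ((2 * int v + 1) * j^2 + 2 * int v * j) * of_int (Legendre (j + 1) 3)
      * inv_qfac (q^2) (int L - j) * inv_qfac (q^2) (int L + j + 1))"
    using bailey_pair_iterated_seed[OF assms(1), of v] unfolding bailey_pair_def by simp
  also have "\<dots> = (\<Sum>\<^sub>\<infinity>j\<in>UNIV. (-1) ^ nat \<bar>j\<bar> * q powi ((2 * int v + 1) * j^2 + 2 * int v * j)
      * of_int (Legendre (j + 1) 3) * qbinom (q^2) (2 * int L + 1) (int L - j))"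
    by (rule infsum_qbinom[symmetric])
  finally show ?thesis
    by (rule trans[OF infsum_cong, rotated]) (simp add: multisum_term_def Let_def sum_list_sum_nth)
qed

end
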